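(* Let $A$ be a finite alphabet and let $H\in I(A^* )$ be defined by $H(u,v)=\binom{v}{u}\eta(u,v)$. Then for all $u,v\in A^*$ and every integer $\ell\ge 0$, $$H^\ell(u,v)=\ell!\,\binom{v}{u}\,[\,|v|=|u|+\ell\,],$$ where $H^\ell$ is the $\ell$-th power of $H$ under convolution (with $H^0=\delta$).
   Context: $A^*$ is the set of finite words over the finite alphabet $A$; $|w|$ is the length of $w$. For words $u=a_1\cdots a_k$ and $v=b_1\cdots b_n$, $\binom{v}{u}$ denotes the number of order-preserving injections $\varphi:[k]\to[n]$ with $a_i=b_{\varphi(i)}$ for all $i$ (the number of occurrences of $u$ as a scattered subword/subsequence of $v$). $A^*$ is partially ordered by $u\le v$ iff $\binom{v}{u}>0$. For a locally finite poset $Q$, the incidence algebra $I(Q)$ over $\mathbb{Q}$ consists of all functions $F$ on pairs $(x,y)$ with $x\le y$, with convolution $(FG)(x,y)=\sum_{x\le z\le y}F(x,z)G(z,y)$ and identity $\delta(x,y)=[x=y]$. Here $[\psi]$ is the Iverson bracket ($1$ if $\psi$ holds, $0$ otherwise), and $\eta(x,y)=[y\text{ covers }x]$; in $A^*$, $v$ covers $u$ iff $u\le v$ and $|v|=|u|+1$. *)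

theory Defs
  imports Complex_Main "HOL-Library.FuncSet"
begin

definition subword_count :: "'a list \<Rightarrow> 'a list \<Rightarrow> nat" where
  "subword_count v u = card {\<phi> \<in> {0..<length u} \<rightarrow>\<^sub>E {0..<length v}.
      (\<forall>i j. i < j \<and> j < length u \<longrightarrow> \<phi> i < \<phi> j) \<and>
      (\<forall>i < length u. u ! i = v ! (\<phi> i))}"

definition subword_le :: "'a list \<Rightarrow> 'a list \<Rightarrow> bool" where
  "subword_le u v \<longleftrightarrow> subword_count v u > 0"

text \<open>Incidence algebra elements represented as functions on all pairs (only the values
  at pairs x <= y matter); convolution sums over the interval [x,y].\<close>

definition conv :: "('a list \<Rightarrow> 'a list \<Rightarrow> rat) \<Rightarrow> ('a list \<Rightarrow> 'a list \<Rightarrow> rat)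
    \<Rightarrow> 'a list \<Rightarrow> 'a list \<Rightarrow> rat" where
  "conv F G x y = (\<Sum>z \<in> {z. subword_le x z \<and> subword_le z y}. F x z * G z y)"

definition delta :: "'a list \<Rightarrow> 'a list \<Rightarrow> rat" where
  "delta x y = (if x = y then 1 else 0)"

definition eta :: "'a list \<Rightarrow> 'a list \<Rightarrow> rat" where
  "eta u v = (if subword_le u v \<and> length v = length u + 1 then 1 else 0)"

fun conv_pow :: "('a list \<Rightarrow> 'a list \<Rightarrow> rat) \<Rightarrow> nat \<Rightarrow> 'a list \<Rightarrow> 'a list \<Rightarrow> rat" where
  "conv_pow F 0 = delta"
| "conv_pow F (Suc n) = conv (conv_pow F n) F"

definition Hfun :: "'a list \<Rightarrow> 'a list \<Rightarrow> rat" where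
  "Hfun u v = of_nat (subword_count v u) * eta u v"

end

theory Submission
  imports Defs
begin

text \<open>An occurrence of u in v avoids exactly |v| - |u| letters of v. Hence deleting one letter of v
  in each of the |v| possible ways and counting occurrences of u in the resulting words counts every
  occurrence of u in v exactly |v| - |u| times; summed over the words z with |z| + 1 = |v| this is
  \<open>\<Sum>\<^sub>z H(z,v) binom(z,u) = (|v| - |u|) binom(v,u)\<close>, the step \<open>H\<^sup>l\<^sup>+\<^sup>1 = H\<^sup>l H\<close> that produces the
  factor (l+1)!. Binomial coefficients of words are computed by the recursion
  \<open>binom(av, bu) = binom(v, bu) + [a = b] binom(v, u)\<close>, according to whether an occurrence of bu
  skips the first letter of av or matches it.\<close>

fun subseq_count :: "'a list \<Rightarrow> 'a list \<Rightarrow> nat" where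
  "subseq_count v [] = 1"
| "subseq_count [] (b # u) = 0"
| "subseq_count (a # v) (b # u) = subseq_count v (b # u) + (if a = b then subseq_count v u else 0)"

lemma subseq_count_longer: "length v < length u \<Longrightarrow> subseq_count v u = 0"
  by (induction v u rule: subseq_count.induct) auto

lemma subseq_count_same_length:
  "length u = length v \<Longrightarrow> subseq_count v u = (if u = v then 1 else 0)"
  by (induction v u rule: subseq_count.induct) (auto simp: subseq_count_longer)

definition embeddings :: "'a list \<Rightarrow> 'a list \<Rightarrow> (nat \<Rightarrow> nat) set" where
  "embeddings v u = {\<phi> \<in> {0..<length u} \<rightarrow>\<^sub>E {0..<length v}.
      (\<forall>i j. i < j \<and> j < length u \<longrightarrow> \<phi> i < \<phi> j) \<and>
      (\<forall>i < length u. u ! i = v ! (\<phi> i))}"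

lemma subword_count_eq_card_embeddings: "subword_count v u = card (embeddings v u)"
  unfolding subword_count_def embeddings_def ..

lemma finite_embeddings: "finite (embeddings v u)"
  unfolding embeddings_def by (auto intro: finite_subset[OF _ finite_PiE[of "{0..<length u}"]])

lemma embeddings_Nil: "embeddings v [] = {\<lambda>_. undefined}"
  unfolding embeddings_def by auto

lemma embeddings_Nil_Cons: "embeddings [] (b # u) = {}"
  unfolding embeddings_def by (auto dest!: PiE_mem[where x = 0])

lemma embeddings_undefined: "\<phi> \<in> embeddings v u \<Longrightarrow> length u \<le> i \<Longrightarrow> \<phi> i = undefined"
  unfolding embeddings_def by (auto simp: PiE_def extensional_def)

definition skip_head :: "nat \<Rightarrow> (nat \<Rightarrow> nat) \<Rightarrow> nat \<Rightarrow> nat" where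
  "skip_head n \<psi> = (\<lambda>i. if i < n then Suc (\<psi> i) else undefined)"

definition match_head :: "nat \<Rightarrow> (nat \<Rightarrow> nat) \<Rightarrow> nat \<Rightarrow> nat" where
  "match_head n \<psi> = (\<lambda>i. if i = 0 then 0 else if i \<le> n then Suc (\<psi> (i - 1)) else undefined)"

lemma inj_on_skip_head: "inj_on (skip_head (length u)) (embeddings v u)"
proof
  fix \<phi> \<psi> assume "\<phi> \<in> embeddings v u" "\<psi> \<in> embeddings v u"
    and eq: "skip_head (length u) \<phi> = skip_head (length u) \<psi>"
  show "\<phi> = \<psi>"
  proof
    fix i show "\<phi> i = \<psi> i"
      using fun_cong[OF eq, of i] embeddings_undefined[OF \<open>\<phi> \<in> _\<close>] embeddings_undefined[OF \<open>\<psi> \<in> _\<close>]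
      by (cases "i < length u") (auto simp: skip_head_def)
  qed
qed

lemma inj_on_match_head: "inj_on (match_head (length u)) (embeddings v u)"
proof
  fix \<phi> \<psi> assume "\<phi> \<in> embeddings v u" "\<psi> \<in> embeddings v u"
    and eq: "match_head (length u) \<phi> = match_head (length u) \<psi>"
  show "\<phi> = \<psi>"
  proof
    fix i show "\<phi> i = \<psi> i"
      using fun_cong[OF eq, of "Suc i"] embeddings_undefined[OF \<open>\<phi> \<in> _\<close>] embeddings_undefined[OF \<open>\<psi> \<in> _\<close>]
      by (cases "i < length u") (auto simp: match_head_def)
  qed
qed

lemma skip_head_in_embeddings:
  "\<psi> \<in> embeddings v u \<Longrightarrow> skip_head (length u) \<psi> \<in> embeddings (a # v) u"
  unfolding embeddings_def skip_head_def by (auto simp: PiE_def extensional_def)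

lemma match_head_in_embeddings:
  assumes "\<psi> \<in> embeddings v u"
  shows "match_head (length u) \<psi> \<in> embeddings (a # v) (a # u)"
proof -
  have range: "\<And>i. i < length u \<Longrightarrow> \<psi> i < length v"
    and mono: "\<And>i j. i < j \<Longrightarrow> j < length u \<Longrightarrow> \<psi> i < \<psi> j"
    and letters: "\<And>i. i < length u \<Longrightarrow> u ! i = v ! (\<psi> i)"
    using assms unfolding embeddings_def by auto
  show ?thesis
    unfolding embeddings_def
  proof (intro CollectI conjI allI impI PiE_I)
    fix i assume "i \<in> {0..<length (a # u)}"
    then show "match_head (length u) \<psi> i \<in> {0..<length (a # v)}"
      using range[of "i - 1"] by (cases i) (auto simp: match_head_def)
  next
    fix i j assume "i < j \<and> j < length (a # u)"
    then show "match_head (length u) \<psi> i < match_head (length u) \<psi> j"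
      using mono[of "i - 1" "j - 1"] by (cases i; cases j) (auto simp: match_head_def)
  next
    fix i assume "i < length (a # u)"
    then show "(a # u) ! i = (a # v) ! match_head (length u) \<psi> i"
      using letters[of "i - 1"] by (cases i) (auto simp: match_head_def)
  qed (auto simp: match_head_def)
qed

lemma embeddings_Cons_skip:
  assumes "\<phi> \<in> embeddings (a # v) (b # u)" and "\<phi> 0 \<noteq> 0"
  shows "\<phi> \<in> skip_head (length (b # u)) ` embeddings v (b # u)"
proof -
  let ?n = "length (b # u)"
  have range: "\<And>i. i < ?n \<Longrightarrow> \<phi> i < Suc (length v)"
    and mono: "\<And>i j. i < j \<Longrightarrow> j < ?n \<Longrightarrow> \<phi> i < \<phi> j"
    and letters: "\<And>i. i < ?n \<Longrightarrow> (b # u) ! i = (a # v) ! \<phi> i"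
    using assms(1) unfolding embeddings_def by auto
  have pos: "0 < \<phi> i" if "i < ?n" for i
    using mono[of 0 i] that assms(2) by (cases i) auto
  define \<psi> where "\<psi> = (\<lambda>i. if i < ?n then \<phi> i - 1 else undefined)"
  have "\<psi> \<in> embeddings v (b # u)"
    unfolding embeddings_def
  proof (intro CollectI conjI allI impI PiE_I)
    fix i assume "i \<in> {0..<?n}"
    then show "\<psi> i \<in> {0..<length v}"
      using range[of i] pos[of i] by (auto simp: \<psi>_def)
  next
    fix i j assume "i < j \<and> j < ?n"
    then show "\<psi> i < \<psi> j"
      using mono[of i j] pos[of i] by (auto simp: \<psi>_def)
  next
    fix i assume "i < ?n"
    then show "(b # u) ! i = v ! \<psi> i"
      using letters[of i] pos[of i] by (cases "\<phi> i") (auto simp: \<psi>_def)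
  qed (auto simp: \<psi>_def)
  moreover have "\<phi> = skip_head ?n \<psi>"
    using pos embeddings_undefined[OF assms(1)] by (auto simp: skip_head_def \<psi>_def not_less)
  ultimately show ?thesis by blast
qed

lemma embeddings_Cons_match:
  assumes "\<phi> \<in> embeddings (a # v) (b # u)" and "\<phi> 0 = 0"
  shows "a = b" and "\<phi> \<in> match_head (length u) ` embeddings v u"
proof -
  have range: "\<And>i. i \<le> length u \<Longrightarrow> \<phi> i < Suc (length v)"
    and mono: "\<And>i j. i < j \<Longrightarrow> j \<le> length u \<Longrightarrow> \<phi> i < \<phi> j"
    and letters: "\<And>i. i \<le> length u \<Longrightarrow> (b # u) ! i = (a # v) ! \<phi> i"
    using assms(1) unfolding embeddings_def by (auto simp: less_Suc_eq_le)
  show "a = b"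
    using letters[of 0] assms(2) by simp
  have pos: "0 < \<phi> (Suc i)" if "i < length u" for i
    using mono[of 0 "Suc i"] that assms(2) by simp
  define \<psi> where "\<psi> = (\<lambda>i. if i < length u then \<phi> (Suc i) - 1 else undefined)"
  have "\<psi> \<in> embeddings v u"
    unfolding embeddings_def
  proof (intro CollectI conjI allI impI PiE_I)
    fix i assume "i \<in> {0..<length u}"
    then show "\<psi> i \<in> {0..<length v}"
      using range[of "Suc i"] pos[of i] by (auto simp: \<psi>_def)
  next
    fix i j assume "i < j \<and> j < length u"
    then show "\<psi> i < \<psi> j"
      using mono[of "Suc i" "Suc j"] pos[of i] by (auto simp: \<psi>_def)
  next
    fix i assume "i < length u"
    then show "u ! i = v ! \<psi> i"
      using letters[of "Suc i"] pos[of i] by (cases "\<phi> (Suc i)") (auto simp: \<psi>_def)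
  qed (auto simp: \<psi>_def)
  moreover have "\<phi> = match_head (length u) \<psi>"
  proof
    fix i show "\<phi> i = match_head (length u) \<psi> i"
      using assms(2) pos[of "i - 1"] embeddings_undefined[OF assms(1), of i]
      by (cases i) (auto simp: match_head_def \<psi>_def)
  qed
  ultimately show "\<phi> \<in> match_head (length u) ` embeddings v u" by blast
qed

lemma embeddings_Cons_Cons:
  "embeddings (a # v) (b # u) = skip_head (length (b # u)) ` embeddings v (b # u)
     \<union> (if a = b then match_head (length u) ` embeddings v u else {})"
proof (intro equalityI subsetI)
  fix \<phi> assume "\<phi> \<in> embeddings (a # v) (b # u)"
  then show "\<phi> \<in> skip_head (length (b # u)) ` embeddings v (b # u)
     \<union> (if a = b then match_head (length u) ` embeddings v u else {})"
  proof (cases "\<phi> 0 = 0")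
    case True
    then show ?thesis using embeddings_Cons_match[OF \<open>\<phi> \<in> _\<close>] by simp
  next
    case False
    then show ?thesis using embeddings_Cons_skip[OF \<open>\<phi> \<in> _\<close>] by blast
  qed
qed (use skip_head_in_embeddings[of _ v "b # u" a] match_head_in_embeddings[of _ v u a] in
    \<open>auto split: if_splits\<close>)

lemma skip_head_match_head_disjoint: "0 < n \<Longrightarrow> skip_head n ` A \<inter> match_head m ` B = {}"
  by (auto simp: skip_head_def match_head_def dest!: fun_cong[where x = 0] split: if_splits)

lemma card_embeddings: "card (embeddings v u) = subseq_count v u"
proof (induction v u rule: subseq_count.induct)
  case (3 a v b u)
  have "card (embeddings (a # v) (b # u))
      = card (skip_head (length (b # u)) ` embeddings v (b # u))
        + card (if a = b then match_head (length u) ` embeddings v u else {})"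
    unfolding embeddings_Cons_Cons
    by (rule card_Un_disjoint) (auto simp: finite_embeddings skip_head_match_head_disjoint)
  also have "\<dots> = subseq_count (a # v) (b # u)"
    using card_image[OF inj_on_skip_head[of "b # u" v]] card_image[OF inj_on_match_head[of u v]] 3 by simp
  finally show ?case .
qed (simp_all add: embeddings_Nil embeddings_Nil_Cons)

corollary subword_count_eq_subseq_count: "subword_count v u = subseq_count v u"
  by (simp add: subword_count_eq_card_embeddings card_embeddings)

definition delete_at :: "nat \<Rightarrow> 'a list \<Rightarrow> 'a list" where
  "delete_at p v = take p v @ drop (Suc p) v"

lemma delete_at_Cons_0 [simp]: "delete_at 0 (a # v) = v"
  by (simp add: delete_at_def)

lemma delete_at_Cons_Suc [simp]: "delete_at (Suc p) (a # v) = a # delete_at p v"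
  by (simp add: delete_at_def)

lemma subseq_count_one_shorter:
  "length z + 1 = length v \<Longrightarrow> subseq_count v z = (\<Sum>p<length v. if delete_at p v = z then 1 else 0)"
proof (induction v arbitrary: z)
  case (Cons a v)
  show ?case
  proof (cases z)
    case (Cons b z')
    have "(\<Sum>p<length (a # v). if delete_at p (a # v) = z then 1 else 0)
        = (if v = z then 1 else 0) + (\<Sum>p<length v. if a # delete_at p v = z then 1 else 0)"
      by (simp add: sum.lessThan_Suc_shift del: sum.lessThan_Suc)
    also have "(\<Sum>p<length v. if a # delete_at p v = z then 1 else 0)
        = (if a = b then subseq_count v z' else 0)"
      using Cons.IH[of z'] Cons.prems \<open>z = b # z'\<close> by auto
    finally show ?thesis
      using Cons.prems \<open>z = b # z'\<close> by (simp add: subseq_count_same_length)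
  qed (use Cons.prems in simp)
qed simp

lemma sum_subseq_count_delete_at:
  "(\<Sum>p<length v. subseq_count (delete_at p v) u) = (length v - length u) * subseq_count v u"
proof (induction v arbitrary: u)
  case (Cons a v)
  show ?case
  proof (cases u)
    case (Cons b u')
    have "(\<Sum>p<length (a # v). subseq_count (delete_at p (a # v)) u)
        = subseq_count v u + (\<Sum>p<length v. subseq_count (a # delete_at p v) u)"
      by (simp add: sum.lessThan_Suc_shift del: sum.lessThan_Suc)
    also have "(\<Sum>p<length v. subseq_count (a # delete_at p v) u)
        = (length v - length u) * subseq_count v u
          + (if a = b then (length v - length u') * subseq_count v u' else 0)"
      using Cons.IH \<open>u = b # u'\<close> by (simp add: sum.distrib)
    finally have "(\<Sum>p<length (a # v). subseq_count (delete_at p (a # v)) u)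
        = (subseq_count v u + (length v - length u) * subseq_count v u)
          + (if a = b then (length v - length u') * subseq_count v u' else 0)"
      by simp
    moreover have "subseq_count v u + (length v - length u) * subseq_count v u
        = (length (a # v) - length u) * subseq_count v u"
      by (cases "length v < length u") (auto simp: subseq_count_longer Suc_diff_le)
    ultimately show ?thesis
      using \<open>u = b # u'\<close> by (simp add: algebra_simps)
  qed simp
qed simp

lemma finite_lists_length_le_UNIV: "finite {z :: ('a::finite) list. length z \<le> n}"
  using finite_lists_length_le[of "UNIV :: 'a set" n] by simp

lemma sum_subseq_count_one_shorter:
  fixes v :: "('a::finite) list"
  shows "(\<Sum>z | length z + 1 = length v. subseq_count v z * subseq_count z u)
    = (length v - length u) * subseq_count v u"
proof -
  let ?T = "{z :: 'a list. length z + 1 = length v}"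
  have "finite ?T"
    by (rule finite_subset[OF _ finite_lists_length_le_UNIV[of "length v"]]) auto
  have "(\<Sum>z\<in>?T. subseq_count v z * subseq_count z u)
      = (\<Sum>z\<in>?T. \<Sum>p<length v. if delete_at p v = z then subseq_count z u else 0)"
    by (intro sum.cong) (auto simp: subseq_count_one_shorter sum_distrib_right intro!: sum.cong)
  also have "\<dots> = (\<Sum>p<length v. \<Sum>z\<in>?T. if delete_at p v = z then subseq_count z u else 0)"
    by (rule sum.swap)
  also have "\<dots> = (\<Sum>p<length v. subseq_count (delete_at p v) u)"
    using \<open>finite ?T\<close> by (intro sum.cong) (auto simp: delete_at_def)
  finally show ?thesis
    by (simp add: sum_subseq_count_delete_at)
qed

lemma subword_le_iff_subseq_count: "subword_le u v \<longleftrightarrow> 0 < subseq_count v u"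
  by (simp add: subword_le_def subword_count_eq_subseq_count)

lemma subword_le_length_le: "subword_le u v \<Longrightarrow> length u \<le> length v"
  by (metis subword_le_iff_subseq_count subseq_count_longer not_le less_irrefl)

lemma Hfun_eq: "Hfun z v = of_nat (subseq_count v z) * (if length v = length z + 1 then 1 else 0)"
  by (simp add: Hfun_def eta_def subword_count_eq_subseq_count subword_le_iff_subseq_count)

lemma conv_Hfun:
  fixes y :: "('a::finite) list"
  assumes "\<And>z. \<not> subword_le x z \<Longrightarrow> F x z = 0"
  shows "conv F Hfun x y = (\<Sum>z | length z + 1 = length y. F x z * Hfun z y)"
proof -
  let ?S = "{z. subword_le x z \<and> subword_le z y}"
  let ?T = "{z. length z + 1 = length y}"
  have fin: "finite (?S \<union> ?T)"
    by (rule finite_subset[OF _ finite_lists_length_le_UNIV[of "length y"]])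
       (auto dest: subword_le_length_le)
  have "conv F Hfun x y = (\<Sum>z\<in>?S \<union> ?T. F x z * Hfun z y)"
    unfolding conv_def
    by (rule sum.mono_neutral_left[OF fin]) (auto simp: Hfun_def eta_def intro: ccontr dest: assms)
  also have "\<dots> = (\<Sum>z\<in>?T. F x z * Hfun z y)"
    by (rule sum.mono_neutral_right[OF fin]) (auto simp: Hfun_eq)
  finally show ?thesis .
qed

theorem mainTheorem1:
  fixes u v :: "('a::finite) list" and l :: nat
  shows "conv_pow Hfun l u v
     = of_nat (fact l) * of_nat (subword_count v u)
       * (if length v = length u + l then 1 else 0)"
proof (induction l arbitrary: u v)
  case 0
  show ?case
    by (simp add: delta_def subword_count_eq_subseq_count subseq_count_same_length)
next
  case (Suc l)
  let ?ok = "if length v = length u + Suc l then 1 else 0 :: rat"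
  have "\<And>z. \<not> subword_le u z \<Longrightarrow> conv_pow Hfun l u z = 0"
    by (simp add: Suc.IH subword_le_iff_subseq_count subword_count_eq_subseq_count)
  then have "conv_pow Hfun (Suc l) u v
      = (\<Sum>z | length z + 1 = length v. conv_pow Hfun l u z * Hfun z v)"
    by (simp add: conv_Hfun)
  also have "\<dots> = (\<Sum>z | length z + 1 = length v.
      of_nat (fact l) * ?ok * of_nat (subseq_count v z * subseq_count z u))"
    by (intro sum.cong) (auto simp: Suc.IH Hfun_eq subword_count_eq_subseq_count)
  also have "\<dots> = of_nat (fact l) * ?ok * of_nat ((length v - length u) * subseq_count v u)"
    by (simp only: sum_distrib_left[symmetric] of_nat_sum[symmetric] sum_subseq_count_one_shorter)
  also have "\<dots> = of_nat (fact (Suc l)) * of_nat (subword_count v u) * ?ok"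
    by (simp add: subword_count_eq_subseq_count algebra_simps)
  finally show ?case .
qed

end
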